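(* Let $S,T$ be stochastic matrices on a finite set $\Omega$, both reversible w.r.t. a probability measure $\mu$ with full support and both positive semidefinite, and assume $S^2=S$. Then for every $a\in[0,1]$, $$\lambda(STS)\ge\lambda(aS+(1-a)T).$$
   Context: $\langle f,g\rangle_\mu=\sum_{x}f(x)g(x)\mu(x)$, $\mu(f)=\sum_xf(x)\mu(x)$. A matrix $P$ is positive semidefinite if it is self-adjoint in $L_2(\mu)$ and $\langle f,Pf\rangle_\mu\ge0$ for all $f$. For a positive semidefinite stochastic $P$ reversible w.r.t. $\mu$, $\lambda(P)=1-\sup\{\langle f,Pf\rangle_\mu:\mu(f)=0,\ \langle f,f\rangle_\mu\le1\}$ (equal to $1$ minus the second largest eigenvalue when $P$ is irreducible, which coincides with the absolute spectral gap). *)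

theory Defs
  imports Complex_Main
begin

definition mat_mult :: "('a::finite \<Rightarrow> 'a \<Rightarrow> real) \<Rightarrow> ('a \<Rightarrow> 'a \<Rightarrow> real) \<Rightarrow> ('a \<Rightarrow> 'a \<Rightarrow> real)" where
  "mat_mult P Q = (\<lambda>x y. \<Sum>z\<in>UNIV. P x z * Q z y)"

definition mat_apply :: "('a::finite \<Rightarrow> 'a \<Rightarrow> real) \<Rightarrow> ('a \<Rightarrow> real) \<Rightarrow> ('a \<Rightarrow> real)" where
  "mat_apply P f = (\<lambda>x. \<Sum>y\<in>UNIV. P x y * f y)"

definition inner_mu :: "('a::finite \<Rightarrow> real) \<Rightarrow> ('a \<Rightarrow> real) \<Rightarrow> ('a \<Rightarrow> real) \<Rightarrow> real" where
  "inner_mu \<mu> f g = (\<Sum>x\<in>UNIV. f x * g x * \<mu> x)"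

definition mean_mu :: "('a::finite \<Rightarrow> real) \<Rightarrow> ('a \<Rightarrow> real) \<Rightarrow> real" where
  "mean_mu \<mu> f = (\<Sum>x\<in>UNIV. f x * \<mu> x)"

definition prob_full_support :: "('a::finite \<Rightarrow> real) \<Rightarrow> bool" where
  "prob_full_support \<mu> \<longleftrightarrow> (\<forall>x. \<mu> x > 0) \<and> (\<Sum>x\<in>UNIV. \<mu> x) = 1"

definition stochastic :: "('a::finite \<Rightarrow> 'a \<Rightarrow> real) \<Rightarrow> bool" where
  "stochastic P \<longleftrightarrow> (\<forall>x y. P x y \<ge> 0) \<and> (\<forall>x. (\<Sum>y\<in>UNIV. P x y) = 1)"

definition reversible :: "('a::finite \<Rightarrow> real) \<Rightarrow> ('a \<Rightarrow> 'a \<Rightarrow> real) \<Rightarrow> bool" where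
  "reversible \<mu> P \<longleftrightarrow> (\<forall>x y. \<mu> x * P x y = \<mu> y * P y x)"

definition self_adjoint_mu :: "('a::finite \<Rightarrow> real) \<Rightarrow> ('a \<Rightarrow> 'a \<Rightarrow> real) \<Rightarrow> bool" where
  "self_adjoint_mu \<mu> P \<longleftrightarrow> (\<forall>f g. inner_mu \<mu> f (mat_apply P g) = inner_mu \<mu> (mat_apply P f) g)"

definition psd_mu :: "('a::finite \<Rightarrow> real) \<Rightarrow> ('a \<Rightarrow> 'a \<Rightarrow> real) \<Rightarrow> bool" where
  "psd_mu \<mu> P \<longleftrightarrow> self_adjoint_mu \<mu> P \<and> (\<forall>f. inner_mu \<mu> f (mat_apply P f) \<ge> 0)"

definition spectral_gap :: "('a::finite \<Rightarrow> real) \<Rightarrow> ('a \<Rightarrow> 'a \<Rightarrow> real) \<Rightarrow> real" where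
  "spectral_gap \<mu> P = 1 - Sup {inner_mu \<mu> f (mat_apply P f) | f. mean_mu \<mu> f = 0 \<and> inner_mu \<mu> f f \<le> 1}"

end

theory Submission
  imports Defs
begin

text \<open>For a test function f of mean zero and norm at most one, put g = S f. Since S is a
  self-adjoint idempotent, the form of S T S at f equals the form of T at g, and g is again
  admissible: it has mean zero and its squared norm is the form of S at f, which is at most one.
  On g the projection S acts as the identity, so the form of T at g is dominated by
  a times the form of S plus (1 - a) times the form of T, because T is a contraction.
  Hence every value in the supremum defining the gap of S T S is dominated by one in the
  supremum for a S + (1 - a) T.\<close>

lemma mat_apply_mat_mult: "mat_apply (mat_mult P Q) f = mat_apply P (mat_apply Q f)"
  unfolding mat_apply_def mat_mult_def
  by (auto simp: sum_distrib_left sum_distrib_right mult.assoc intro!: ext sum.swap[THEN trans])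

lemma inner_mu_mat_apply_linear_comb:
  "inner_mu \<mu> g (mat_apply (\<lambda>x y. a * P x y + b * Q x y) g)
   = a * inner_mu \<mu> g (mat_apply P g) + b * inner_mu \<mu> g (mat_apply Q g)"
  unfolding inner_mu_def mat_apply_def
  by (simp add: sum_distrib_left sum_distrib_right sum.distrib[symmetric] algebra_simps)

lemma stochastic_convex_comb:
  assumes "stochastic P" "stochastic Q" "0 \<le> a" "a \<le> 1"
  shows "stochastic (\<lambda>x y. a * P x y + (1 - a) * Q x y)"
  using assms unfolding stochastic_def by (auto simp: sum.distrib sum_distrib_left[symmetric])

lemma reversible_linear_comb:
  assumes "reversible \<mu> P" "reversible \<mu> Q"
  shows "reversible \<mu> (\<lambda>x y. a * P x y + b * Q x y)"
  using assms unfolding reversible_def by (simp add: algebra_simps)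

lemma stochastic_sum_row:
  assumes "stochastic P"
  shows "(\<Sum>x\<in>UNIV. \<Sum>y\<in>UNIV. \<mu> x * P x y * h x) = (\<Sum>x\<in>UNIV. \<mu> x * h x)"
proof -
  have "(\<Sum>x\<in>UNIV. \<Sum>y\<in>UNIV. \<mu> x * P x y * h x) = (\<Sum>x\<in>UNIV. \<mu> x * h x * (\<Sum>y\<in>UNIV. P x y))"
    by (simp add: sum_distrib_left mult_ac)
  then show ?thesis using assms unfolding stochastic_def by simp
qed

lemma reversible_stochastic_sum_column:
  assumes "stochastic P" "reversible \<mu> P"
  shows "(\<Sum>x\<in>UNIV. \<Sum>y\<in>UNIV. \<mu> x * P x y * h y) = (\<Sum>y\<in>UNIV. \<mu> y * h y)"
proof -
  have "(\<Sum>x\<in>UNIV. \<Sum>y\<in>UNIV. \<mu> x * P x y * h y) = (\<Sum>x\<in>UNIV. \<Sum>y\<in>UNIV. \<mu> y * P y x * h y)"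
    using assms(2) unfolding reversible_def by simp
  also have "\<dots> = (\<Sum>y\<in>UNIV. \<Sum>x\<in>UNIV. \<mu> y * P y x * h y)"
    by (rule sum.swap)
  finally show ?thesis
    using stochastic_sum_row[OF assms(1)] by simp
qed

lemma mean_mu_mat_apply:
  assumes "stochastic P" "reversible \<mu> P"
  shows "mean_mu \<mu> (mat_apply P f) = mean_mu \<mu> f"
proof -
  have "mean_mu \<mu> (mat_apply P f) = (\<Sum>x\<in>UNIV. \<Sum>y\<in>UNIV. \<mu> x * P x y * f y)"
    unfolding mean_mu_def mat_apply_def by (simp add: sum_distrib_left mult_ac)
  then show ?thesis
    using reversible_stochastic_sum_column[OF assms, of f] unfolding mean_mu_def by (simp add: mult_ac)
qed

text \<open>Bound g x g y by the mean of the squares; reversibility turns both halves into the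
  squared norm of g.\<close>

lemma inner_mu_mat_apply_le:
  assumes "stochastic P" "reversible \<mu> P" "\<forall>x. \<mu> x \<ge> 0"
  shows "inner_mu \<mu> g (mat_apply P g) \<le> inner_mu \<mu> g g"
proof -
  have pointwise: "\<mu> x * P x y * (g x * g y) \<le> \<mu> x * P x y * ((g x)\<^sup>2 + (g y)\<^sup>2) / 2" for x y
  proof -
    have "0 \<le> \<mu> x * P x y"
      using assms unfolding stochastic_def by simp
    moreover have "g x * g y \<le> ((g x)\<^sup>2 + (g y)\<^sup>2) / 2"
      using sum_squares_ge_zero[of "g x - g y" 0] by (simp add: power2_eq_square algebra_simps)
    ultimately show ?thesis
      using mult_left_mono by fastforce
  qed
  have "inner_mu \<mu> g (mat_apply P g) = (\<Sum>x\<in>UNIV. \<Sum>y\<in>UNIV. \<mu> x * P x y * (g x * g y))"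
    unfolding inner_mu_def mat_apply_def by (simp add: sum_distrib_left sum_distrib_right mult_ac)
  also have "\<dots> \<le> (\<Sum>x\<in>UNIV. \<Sum>y\<in>UNIV. \<mu> x * P x y * ((g x)\<^sup>2 + (g y)\<^sup>2) / 2)"
    by (intro sum_mono pointwise)
  also have "\<dots> = ((\<Sum>x\<in>UNIV. \<Sum>y\<in>UNIV. \<mu> x * P x y * (g x)\<^sup>2)
                  + (\<Sum>x\<in>UNIV. \<Sum>y\<in>UNIV. \<mu> x * P x y * (g y)\<^sup>2)) / 2"
    by (simp add: sum_divide_distrib[symmetric] sum.distrib[symmetric] algebra_simps)
  also have "\<dots> = inner_mu \<mu> g g"
    using stochastic_sum_row[OF assms(1), of \<mu> "\<lambda>x. (g x)\<^sup>2"]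
      reversible_stochastic_sum_column[OF assms(1,2), of "\<lambda>y. (g y)\<^sup>2"]
    unfolding inner_mu_def by (simp add: power2_eq_square mult_ac)
  finally show ?thesis .
qed

lemma spectral_gap_mono_dominated:
  assumes "stochastic Q" "reversible \<mu> Q" "\<forall>x. \<mu> x \<ge> 0"
    and dominated: "\<And>f. mean_mu \<mu> f = 0 \<Longrightarrow> inner_mu \<mu> f f \<le> 1 \<Longrightarrow>
      \<exists>g. mean_mu \<mu> g = 0 \<and> inner_mu \<mu> g g \<le> 1 \<and>
          inner_mu \<mu> f (mat_apply P f) \<le> inner_mu \<mu> g (mat_apply Q g)"
  shows "spectral_gap \<mu> Q \<le> spectral_gap \<mu> P"
proof -
  let ?form = "\<lambda>R. {inner_mu \<mu> f (mat_apply R f) | f. mean_mu \<mu> f = 0 \<and> inner_mu \<mu> f f \<le> 1}"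
  have "mean_mu \<mu> (\<lambda>_. 0) = 0" "inner_mu \<mu> (\<lambda>_. 0) (\<lambda>_. 0) \<le> 1"
    unfolding mean_mu_def inner_mu_def by simp_all
  then have "?form P \<noteq> {}"
    by blast
  moreover have "bdd_above (?form Q)"
  proof (rule bdd_aboveI[where M = 1])
    fix c
    assume "c \<in> ?form Q"
    then obtain g where "c = inner_mu \<mu> g (mat_apply Q g)" "inner_mu \<mu> g g \<le> 1"
      by blast
    then show "c \<le> 1"
      using inner_mu_mat_apply_le[OF assms(1-3), of g] by linarith
  qed
  moreover have "\<forall>b\<in>?form P. \<exists>c\<in>?form Q. b \<le> c"
    using dominated by blast
  ultimately have "Sup (?form P) \<le> Sup (?form Q)"
    by (intro cSup_mono) auto
  then show ?thesis
    unfolding spectral_gap_def by linarith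
qed

lemma self_adjoint_idempotent_sandwich:
  assumes "self_adjoint_mu \<mu> S" "mat_mult S S = S"
  shows "inner_mu \<mu> f (mat_apply (mat_mult (mat_mult S T) S) f)
           = inner_mu \<mu> (mat_apply S f) (mat_apply T (mat_apply S f))"
    and "inner_mu \<mu> (mat_apply S f) (mat_apply S f) = inner_mu \<mu> f (mat_apply S f)"
    and "inner_mu \<mu> (mat_apply S f) (mat_apply S (mat_apply S f))
           = inner_mu \<mu> (mat_apply S f) (mat_apply S f)"
proof -
  have idem: "mat_apply S (mat_apply S h) = mat_apply S h" for h
    using mat_apply_mat_mult[of S S h] assms(2) by simp
  show "inner_mu \<mu> f (mat_apply (mat_mult (mat_mult S T) S) f)
          = inner_mu \<mu> (mat_apply S f) (mat_apply T (mat_apply S f))"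
    using assms(1) unfolding mat_apply_mat_mult self_adjoint_mu_def by simp
  show "inner_mu \<mu> (mat_apply S f) (mat_apply S f) = inner_mu \<mu> f (mat_apply S f)"
    using assms(1) idem unfolding self_adjoint_mu_def by metis
  show "inner_mu \<mu> (mat_apply S f) (mat_apply S (mat_apply S f))
          = inner_mu \<mu> (mat_apply S f) (mat_apply S f)"
    by (simp add: idem)
qed

lemma inner_mu_mat_apply_le_convex_comb:
  assumes "stochastic T" "reversible \<mu> T" "\<forall>x. \<mu> x \<ge> 0" "0 \<le> a"
    and "inner_mu \<mu> g (mat_apply S g) = inner_mu \<mu> g g"
  shows "inner_mu \<mu> g (mat_apply T g) \<le> inner_mu \<mu> g (mat_apply (\<lambda>x y. a * S x y + (1 - a) * T x y) g)"
  using inner_mu_mat_apply_le[OF assms(1-3), of g] assms(4,5)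
  unfolding inner_mu_mat_apply_linear_comb by (simp add: algebra_simps mult_left_mono)

theorem mainTheorem13:
  fixes \<mu> :: "'a::finite \<Rightarrow> real" and S T :: "'a \<Rightarrow> 'a \<Rightarrow> real" and a :: real
  assumes "prob_full_support \<mu>"
    and "stochastic S" and "stochastic T"
    and "reversible \<mu> S" and "reversible \<mu> T"
    and "psd_mu \<mu> S" and "psd_mu \<mu> T"
    and "mat_mult S S = S"
    and "0 \<le> a" and "a \<le> 1"
  shows "spectral_gap \<mu> (mat_mult (mat_mult S T) S)
           \<ge> spectral_gap \<mu> (\<lambda>x y. a * S x y + (1 - a) * T x y)"
proof (rule spectral_gap_mono_dominated)
  show \<mu>_nonneg: "\<forall>x. \<mu> x \<ge> 0"
    using assms(1) unfolding prob_full_support_def by (simp add: less_imp_le)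
  show "stochastic (\<lambda>x y. a * S x y + (1 - a) * T x y)"
    using stochastic_convex_comb assms(2,3,9,10) .
  show "reversible \<mu> (\<lambda>x y. a * S x y + (1 - a) * T x y)"
    using reversible_linear_comb assms(4,5) .
  fix f
  assume f: "mean_mu \<mu> f = 0" "inner_mu \<mu> f f \<le> 1"
  let ?g = "mat_apply S f"
  note sandwich = self_adjoint_idempotent_sandwich[of \<mu> S, OF _ assms(8)]
  have "mean_mu \<mu> ?g = 0"
    using mean_mu_mat_apply[OF assms(2,4)] f(1) by simp
  moreover have "inner_mu \<mu> ?g ?g \<le> 1"
    using sandwich(2) assms(6) inner_mu_mat_apply_le[OF assms(2,4) \<mu>_nonneg, of f] f(2)
    unfolding psd_mu_def by force
  moreover have "inner_mu \<mu> f (mat_apply (mat_mult (mat_mult S T) S) f)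
      \<le> inner_mu \<mu> ?g (mat_apply (\<lambda>x y. a * S x y + (1 - a) * T x y) ?g)"
    using sandwich(1,3) assms(6) inner_mu_mat_apply_le_convex_comb[OF assms(3,5) \<mu>_nonneg assms(9)]
    unfolding psd_mu_def by force
  ultimately show "\<exists>g. mean_mu \<mu> g = 0 \<and> inner_mu \<mu> g g \<le> 1 \<and>
      inner_mu \<mu> f (mat_apply (mat_mult (mat_mult S T) S) f)
        \<le> inner_mu \<mu> g (mat_apply (\<lambda>x y. a * S x y + (1 - a) * T x y) g)"
    by blast
qed

end
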